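(* Let $G$ be an ordered abelian group with smallest nonzero convex subgroup $A$, $H=G/A$, $\beta$ the cocycle of a transversal map, $L$ a valued field of characteristic $0$ with residue characteristic $p$, value group $A$ and cross-section $\sigma:A\to L^\times$, and $\delta$ an infinite cardinal. Let $\overline{\phi}\in\mathrm{Aut}(L)$ and let $\hat\phi_\beta$ be an automorphism of the ordered group $G_\beta$ of the form $\hat\phi_\beta(z,h)=(\hat\phi_1(z),\hat\phi_2(h))$ for maps $\hat\phi_1:A\to A$, $\hat\phi_2:H\to H$. If $\overline{\phi}\circ\sigma=\sigma\circ\hat\phi_1$, then the map $\phi:L(t^H,\beta)_\delta\to L(t^H,\beta)_\delta$, $\phi\left(\sum_{h\in S}a_ht^h\right)=\sum_{h\in S}\overline{\phi}(a_h)t^{\hat\phi_2(h)}$, is an automorphism of $L(t^H,\beta)_\delta$ as a valued field.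
   Context: $H$ has the order induced from $G$ and projection $\rho$. A transversal map is $\alpha:H\to G$ with $\rho\alpha=\mathrm{id}_H$, $\alpha(0)=0$, and $\beta(h,h')=\alpha(h+h')-\alpha(h)-\alpha(h')\in A$. $G_\beta$ is $A\times H$ with $(z,h)+(z',h')=(z+z'-\beta(h,h'),h+h')$ and lexicographic order ($(z,h)\le(z',h')$ iff $h<h'$, or $h=h'$ and $z\le z'$). A cross-section is a homomorphism $\sigma:A\to L^\times$ with $v(\sigma(a))=a$. $L(t^H,\beta)_\delta$ is the field of formal sums $\sum_{h\in S}a_ht^h$, $S\subseteq H$ well ordered, $|S|\le\delta$, $a_h\in L$, with coefficientwise addition, multiplication $\left(\sum a_ht^h\right)\left(\sum b_ht^h\right)=\sum_l\left(\sum_{h+h'=l}a_hb_{h'}\sigma(-\beta(h,h'))\right)t^l$, and valuation $val(\sum_{h\in S}a_ht^h)=(v(a_{h_0}),h_0)\in G_\beta$, $h_0=\min S$. *)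

theory Defs
  imports Main "HOL-Computational_Algebra.Primes"
begin

definition convex_subgroup :: "'g::linordered_ab_group_add set \<Rightarrow> bool" where
  "convex_subgroup B \<longleftrightarrow> 0 \<in> B \<and> (\<forall>x\<in>B. \<forall>y\<in>B. x + y \<in> B) \<and> (\<forall>x\<in>B. - x \<in> B)
     \<and> (\<forall>x\<in>B. \<forall>y\<in>B. \<forall>z. x \<le> z \<and> z \<le> y \<longrightarrow> z \<in> B)"

definition smallest_nonzero_convex_subgroup :: "'g::linordered_ab_group_add set \<Rightarrow> bool" where
  "smallest_nonzero_convex_subgroup A \<longleftrightarrow> convex_subgroup A \<and> A \<noteq> {0}
     \<and> (\<forall>B. convex_subgroup B \<and> B \<noteq> {0} \<longrightarrow> A \<subseteq> B)"

text \<open>H = G/A with the induced order, given through the projection rho: a surjective,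
  order-preserving group homomorphism with kernel A.\<close>
definition quotient_projection ::
  "'g::linordered_ab_group_add set \<Rightarrow> ('g \<Rightarrow> 'h::linordered_ab_group_add) \<Rightarrow> bool" where
  "quotient_projection A rho \<longleftrightarrow> (\<forall>x y. rho (x + y) = rho x + rho y) \<and> surj rho
     \<and> (\<forall>x. rho x = 0 \<longleftrightarrow> x \<in> A) \<and> (\<forall>x y. x \<le> y \<longrightarrow> rho x \<le> rho y)"

definition transversal :: "('g \<Rightarrow> 'h) \<Rightarrow> ('h::zero \<Rightarrow> 'g::zero) \<Rightarrow> bool" where
  "transversal rho alpha \<longleftrightarrow> (\<forall>h. rho (alpha h) = h) \<and> alpha 0 = 0"

definition cocycle :: "('h::plus \<Rightarrow> 'g::ab_group_add) \<Rightarrow> 'h \<Rightarrow> 'h \<Rightarrow> 'g" where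
  "cocycle alpha h h' = alpha (h + h') - alpha h - alpha h'"

definition gbeta_add :: "('h \<Rightarrow> 'h \<Rightarrow> 'g) \<Rightarrow> 'g \<times> 'h \<Rightarrow> 'g \<times> 'h \<Rightarrow> 'g::ab_group_add \<times> 'h::plus" where
  "gbeta_add beta x y = (fst x + fst y - beta (snd x) (snd y), snd x + snd y)"

definition gbeta_le :: "'g::order \<times> 'h::order \<Rightarrow> 'g \<times> 'h \<Rightarrow> bool" where
  "gbeta_le x y \<longleftrightarrow> snd x < snd y \<or> (snd x = snd y \<and> fst x \<le> fst y)"

definition gbeta_aut :: "'g::linordered_ab_group_add set \<Rightarrow> ('h \<Rightarrow> 'h \<Rightarrow> 'g)
     \<Rightarrow> ('g \<times> 'h \<Rightarrow> 'g \<times> 'h::linordered_ab_group_add) \<Rightarrow> bool" where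
  "gbeta_aut A beta psi \<longleftrightarrow> bij_betw psi (A \<times> UNIV) (A \<times> UNIV)
     \<and> (\<forall>x\<in>A \<times> UNIV. \<forall>y\<in>A \<times> UNIV. psi (gbeta_add beta x y) = gbeta_add beta (psi x) (psi y))
     \<and> (\<forall>x\<in>A \<times> UNIV. \<forall>y\<in>A \<times> UNIV. gbeta_le x y \<longleftrightarrow> gbeta_le (psi x) (psi y))"

text \<open>v is the valuation on nonzero elements (v 0 is irrelevant / stands for infinity).\<close>
definition valued_field :: "('l::field \<Rightarrow> 'g::linordered_ab_group_add) \<Rightarrow> 'g set \<Rightarrow> bool" where
  "valued_field v A \<longleftrightarrow>
     (\<forall>x y. x \<noteq> 0 \<longrightarrow> y \<noteq> 0 \<longrightarrow> v (x * y) = v x + v y)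
   \<and> (\<forall>x y. x \<noteq> 0 \<longrightarrow> y \<noteq> 0 \<longrightarrow> x + y \<noteq> 0 \<longrightarrow> min (v x) (v y) \<le> v (x + y))
   \<and> v ` (- {0}) = A"

definition residue_char :: "('l::field_char_0 \<Rightarrow> 'g::linordered_ab_group_add) \<Rightarrow> nat \<Rightarrow> bool" where
  "residue_char v p \<longleftrightarrow> (p = 0 \<and> (\<forall>n::nat. n > 0 \<longrightarrow> v (of_nat n) = 0))
     \<or> (prime p \<and> 0 < v (of_nat p))"

definition cross_section :: "('l::field \<Rightarrow> 'g::linordered_ab_group_add) \<Rightarrow> 'g set \<Rightarrow> ('g \<Rightarrow> 'l) \<Rightarrow> bool" where
  "cross_section v A sigma \<longleftrightarrow> (\<forall>a\<in>A. sigma a \<noteq> 0 \<and> v (sigma a) = a)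
     \<and> (\<forall>a\<in>A. \<forall>b\<in>A. sigma (a + b) = sigma a * sigma b)"

text \<open>Automorphism of L as a valued field: field automorphism preserving the valuation ring.\<close>
definition valued_field_aut :: "('l::field \<Rightarrow> 'g::linordered_ab_group_add) \<Rightarrow> ('l \<Rightarrow> 'l) \<Rightarrow> bool" where
  "valued_field_aut v f \<longleftrightarrow> bij f \<and> (\<forall>x y. f (x + y) = f x + f y) \<and> (\<forall>x y. f (x * y) = f x * f y)
     \<and> (\<forall>x. x \<noteq> 0 \<longrightarrow> (0 \<le> v x \<longleftrightarrow> 0 \<le> v (f x)))"

text \<open>A formal sum \<open>\<Sum>h\<in>S. a_h t^h\<close> is represented by its coefficient function.\<close>
definition hsupp :: "('h \<Rightarrow> 'l::zero) \<Rightarrow> 'h set" where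
  "hsupp f = {h. f h \<noteq> 0}"

definition well_ordered_set :: "'h::linorder set \<Rightarrow> bool" where
  "well_ordered_set S \<longleftrightarrow> (\<forall>T\<subseteq>S. T \<noteq> {} \<longrightarrow> (\<exists>m\<in>T. \<forall>x\<in>T. m \<le> x))"

text \<open>|S| \<le> |D|; the infinite cardinal delta is represented as |D| for an infinite set D.\<close>
definition card_le :: "'a set \<Rightarrow> 'd set \<Rightarrow> bool" where
  "card_le S D \<longleftrightarrow> (\<exists>g. inj_on g S \<and> g ` S \<subseteq> D)"

definition hahn_carrier :: "'d set \<Rightarrow> ('h::linorder \<Rightarrow> 'l::zero) set" where
  "hahn_carrier D = {f. well_ordered_set (hsupp f) \<and> card_le (hsupp f) D}"

definition hahn_add :: "('h \<Rightarrow> 'l::plus) \<Rightarrow> ('h \<Rightarrow> 'l) \<Rightarrow> 'h \<Rightarrow> 'l" where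
  "hahn_add f g = (\<lambda>h. f h + g h)"

definition hahn_mul :: "('g \<Rightarrow> 'l::field) \<Rightarrow> ('h \<Rightarrow> 'h \<Rightarrow> 'g::ab_group_add)
     \<Rightarrow> ('h::ab_group_add \<Rightarrow> 'l) \<Rightarrow> ('h \<Rightarrow> 'l) \<Rightarrow> 'h \<Rightarrow> 'l" where
  "hahn_mul sigma beta f g = (\<lambda>l. \<Sum>p\<in>{(h, h'). h + h' = l \<and> f h \<noteq> 0 \<and> g h' \<noteq> 0}.
        f (fst p) * g (snd p) * sigma (- beta (fst p) (snd p)))"

definition hahn_val :: "('l::zero \<Rightarrow> 'g) \<Rightarrow> ('h::linorder \<Rightarrow> 'l) \<Rightarrow> 'g \<times> 'h" where
  "hahn_val v f = (v (f (LEAST h. f h \<noteq> 0)), LEAST h. f h \<noteq> 0)"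

text \<open>Valuation ring membership: f = 0 (valuation infinity) or val f \<ge> (0,0) in G_beta.\<close>
definition hahn_val_nonneg :: "('l::zero \<Rightarrow> 'g::linordered_ab_group_add) \<Rightarrow> ('h::linordered_ab_group_add \<Rightarrow> 'l) \<Rightarrow> bool" where
  "hahn_val_nonneg v f \<longleftrightarrow> f = (\<lambda>_. 0) \<or> gbeta_le (0, 0) (hahn_val v f)"

definition hahn_valued_aut :: "('g \<Rightarrow> 'l::field) \<Rightarrow> ('h \<Rightarrow> 'h \<Rightarrow> 'g::linordered_ab_group_add)
     \<Rightarrow> ('l \<Rightarrow> 'g) \<Rightarrow> 'd set \<Rightarrow> (('h::linordered_ab_group_add \<Rightarrow> 'l) \<Rightarrow> ('h \<Rightarrow> 'l)) \<Rightarrow> bool" where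
  "hahn_valued_aut sigma beta v D phi \<longleftrightarrow>
     bij_betw phi (hahn_carrier D) (hahn_carrier D)
   \<and> (\<forall>x\<in>hahn_carrier D. \<forall>y\<in>hahn_carrier D. phi (hahn_add x y) = hahn_add (phi x) (phi y))
   \<and> (\<forall>x\<in>hahn_carrier D. \<forall>y\<in>hahn_carrier D.
         phi (hahn_mul sigma beta x y) = hahn_mul sigma beta (phi x) (phi y))
   \<and> (\<forall>x\<in>hahn_carrier D. hahn_val_nonneg v x \<longleftrightarrow> hahn_val_nonneg v (phi x))"

text \<open>The map \<open>\<Sum> a_h t^h \<mapsto> \<Sum> phibar(a_h) t^{phi2 h}\<close>: coefficient at k is phibar(a_h) where phi2 h = k
  (phi2 is bijective since the automorphism of G_beta is).\<close>
definition hahn_map :: "('l \<Rightarrow> 'l) \<Rightarrow> ('h \<Rightarrow> 'h) \<Rightarrow> ('h \<Rightarrow> 'l) \<Rightarrow> 'h \<Rightarrow> 'l" where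
  "hahn_map phibar phi2 f = (\<lambda>k. phibar (f (inv phi2 k)))"

end

theory Submission
  imports Defs HOL.Modules
begin

(* Comparing (0, h) with (0, h') in G_beta shows that an automorphism of product form restricts
   to an order automorphism phi2 of H and carries the cocycle to itself:
   phi1 (- beta h h') = - beta (phi2 h) (phi2 h').  Together with phibar o sigma = sigma o phi1
   this says that phibar transforms the twisting factors sigma (- beta h h') of the product exactly
   as phi2 transforms the exponents, so the coefficient map commutes with the twisted convolution
   after reindexing the pairs (h, h') by phi2 x phi2.  Supports are transported by the order
   isomorphism phi2, so well-orderedness, the cardinality bound and the leading term are preserved. *)

lemma quotient_projection_additive:
  assumes "quotient_projection A rho"
  shows "additive rho"
  using assms by (simp add: quotient_projection_def additive_def)

lemma uminus_cocycle_mem: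
  assumes "quotient_projection A rho" and "transversal rho alpha"
  shows "- cocycle alpha h h' \<in> A"
proof -
  interpret additive rho by (rule quotient_projection_additive[OF assms(1)])
  have "rho (- cocycle alpha h h') = 0"
    using assms(2) by (simp add: cocycle_def minus diff transversal_def)
  then show ?thesis using assms(1) by (simp add: quotient_projection_def)
qed

lemma cocycle_zero_zero:
  fixes alpha :: "'h::monoid_add \<Rightarrow> 'g::ab_group_add"
  assumes "transversal rho alpha"
  shows "cocycle alpha 0 0 = 0"
  using assms by (simp add: cocycle_def transversal_def)

lemma gbeta_autD:
  assumes "gbeta_aut A beta psi" and "x \<in> A \<times> UNIV" and "y \<in> A \<times> UNIV"
  shows "psi (gbeta_add beta x y) = gbeta_add beta (psi x) (psi y)"
    and "gbeta_le x y \<longleftrightarrow> gbeta_le (psi x) (psi y)"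
  using assms unfolding gbeta_aut_def by blast+

lemma gbeta_aut_prod_hom:
  assumes "gbeta_aut A beta (\<lambda>(z, h). (phi1 z, phi2 h))" and "0 \<in> A" and "beta 0 0 = 0"
  shows "additive phi2" and "phi1 (- beta h h') = - beta (phi2 h) (phi2 h')"
proof -
  have "(phi1 (- beta h h'), phi2 (h + h')) = (phi1 0 + phi1 0 - beta (phi2 h) (phi2 h'), phi2 h + phi2 h')"
    for h h'
    using gbeta_autD(1)[OF assms(1), of "(0, h)" "(0, h')"] assms(2) by (simp add: gbeta_add_def)
  then have phi1_eq: "phi1 (- beta h h') = phi1 0 + phi1 0 - beta (phi2 h) (phi2 h')"
    and phi2_add: "phi2 (h + h') = phi2 h + phi2 h'" for h h'
    by simp_all
  show "additive phi2" by (rule additive.intro) (rule phi2_add)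
  then have "phi2 0 = 0" by (rule additive.zero)
  then have "phi1 0 = 0" using phi1_eq[of 0 0] assms(3) by simp
  then show "phi1 (- beta h h') = - beta (phi2 h) (phi2 h')" using phi1_eq by simp
qed

lemma gbeta_aut_prod_strict_mono:
  fixes phi1 :: "'g::linordered_ab_group_add \<Rightarrow> 'g" and phi2 :: "'h::linordered_ab_group_add \<Rightarrow> 'h"
  assumes "gbeta_aut A beta (\<lambda>(z, h). (phi1 z, phi2 h))" and "0 \<in> A"
  shows "strict_mono phi2"
proof
  fix x y :: 'h assume "x < y"
  have le_iff: "gbeta_le (z, a) (z, b) \<longleftrightarrow> gbeta_le (phi1 z, phi2 a) (phi1 z, phi2 b)"
    if "z \<in> A" for z a b
    using gbeta_autD(2)[OF assms(1), of "(z, a)" "(z, b)"] that by simp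
  have "gbeta_le (0 :: 'g, x) (0, y)" and "\<not> gbeta_le (0 :: 'g, y) (0, x)"
    using \<open>x < y\<close> by (auto simp: gbeta_le_def)
  then have "gbeta_le (phi1 0, phi2 x) (phi1 0, phi2 y)" and "\<not> gbeta_le (phi1 0, phi2 y) (phi1 0, phi2 x)"
    using le_iff[OF assms(2)] by simp_all
  then show "phi2 x < phi2 y" by (auto simp: gbeta_le_def)
qed

lemma gbeta_aut_prod_surj:
  assumes "gbeta_aut A beta (\<lambda>(z, h). (phi1 z, phi2 h))" and "0 \<in> A"
  shows "surj phi2"
proof -
  have "(0, k) \<in> (\<lambda>(z, h). (phi1 z, phi2 h)) ` (A \<times> UNIV)" for k
    using assms unfolding gbeta_aut_def bij_betw_def by simp
  then show ?thesis by (auto simp: image_iff)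
qed

lemma well_ordered_set_image:
  fixes q :: "'a::linorder \<Rightarrow> 'b::linorder"
  assumes "strict_mono_on S q" and "well_ordered_set S"
  shows "well_ordered_set (q ` S)"
  unfolding well_ordered_set_def
proof (intro allI impI)
  fix T assume T: "T \<subseteq> q ` S" "T \<noteq> {}"
  then have "S \<inter> q -` T \<noteq> {}" by blast
  then obtain m where m: "m \<in> S \<inter> q -` T" "\<forall>x\<in>S \<inter> q -` T. m \<le> x"
    using assms(2) unfolding well_ordered_set_def by (meson Int_lower1)
  have "q m \<le> x" if "x \<in> T" for x
    using that T(1) m assms(1) by (auto intro: strict_mono_on_leD)
  then show "\<exists>m\<in>T. \<forall>x\<in>T. m \<le> x" using m by blast
qed

lemma card_le_image:
  assumes "card_le S D"
  shows "card_le (q ` S) D"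
proof -
  obtain g where g: "inj_on g S" "g ` S \<subseteq> D"
    using assms unfolding card_le_def by blast
  have "inj_on (g \<circ> inv_into S q) (q ` S)"
    using g(1) by (auto intro!: comp_inj_on inj_on_inv_into inj_on_subset[of g S] inv_into_into)
  moreover have "(g \<circ> inv_into S q) ` (q ` S) \<subseteq> D"
    using g(2) by (auto simp: image_subset_iff inv_into_into)
  ultimately show ?thesis unfolding card_le_def by blast
qed

lemma hsupp_hahn_map:
  assumes "bij phi2" and "\<And>a. phibar a = 0 \<longleftrightarrow> a = 0"
  shows "hsupp (hahn_map phibar phi2 f) = phi2 ` hsupp f"
proof -
  have "phi2 ` hsupp f = inv phi2 -` hsupp f"
    using assms(1) by (simp add: bij_vimage_eq_inv_image bij_imp_bij_inv inv_inv_eq)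
  then show ?thesis
    using assms(2) by (auto simp: hsupp_def hahn_map_def)
qed

lemma hahn_map_carrier:
  assumes "strict_mono phi2" and "surj phi2" and "\<And>a. phibar a = 0 \<longleftrightarrow> a = 0"
    and "f \<in> hahn_carrier D"
  shows "hahn_map phibar phi2 f \<in> hahn_carrier D"
proof -
  have "bij phi2" using assms(1,2) by (simp add: bij_def strict_mono_imp_inj_on)
  then show ?thesis
    using assms by (auto simp: hahn_carrier_def hsupp_hahn_map card_le_image
        intro: well_ordered_set_image monotone_on_subset)
qed

lemma hahn_map_inv:
  assumes "bij phi2" and "bij phibar"
  shows "hahn_map (inv phibar) (inv phi2) (hahn_map phibar phi2 f) = f"
  using assms by (simp add: hahn_map_def inv_inv_eq bij_is_inj)

lemma bij_betw_hahn_map: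
  assumes "strict_mono phi2" and "surj phi2" and "bij phibar" and "phibar 0 = 0"
  shows "bij_betw (hahn_map phibar phi2) (hahn_carrier D) (hahn_carrier D)"
proof (rule bij_betw_byWitness)
  have bij2: "bij phi2" using assms(1,2) by (simp add: bij_def strict_mono_imp_inj_on)
  have zero: "phibar a = 0 \<longleftrightarrow> a = 0" "inv phibar a = 0 \<longleftrightarrow> a = 0" for a
    using assms(3,4) by (metis bij_inv_eq_iff)+
  have "strict_mono (inv phi2)"
    using assms(1,2) by (rule strict_mono_inv) (simp add: bij2 bij_is_inj)
  moreover have "surj (inv phi2)" using bij2 by (simp add: bij_imp_bij_inv bij_is_surj)
  ultimately show "hahn_map (inv phibar) (inv phi2) ` hahn_carrier D \<subseteq> hahn_carrier D"
    using zero by (auto intro: hahn_map_carrier)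
  show "hahn_map phibar phi2 ` hahn_carrier D \<subseteq> hahn_carrier D"
    using assms(1,2) zero by (auto intro: hahn_map_carrier)
  show "\<forall>f\<in>hahn_carrier D. hahn_map (inv phibar) (inv phi2) (hahn_map phibar phi2 f) = f"
    using bij2 assms(3) by (simp add: hahn_map_inv)
  show "\<forall>f\<in>hahn_carrier D. hahn_map phibar phi2 (hahn_map (inv phibar) (inv phi2) f) = f"
    using hahn_map_inv[of "inv phi2" "inv phibar"] bij2 assms(3)
    by (simp add: bij_imp_bij_inv inv_inv_eq)
qed

lemma hahn_map_add:
  assumes "additive phibar"
  shows "hahn_map phibar phi2 (hahn_add f g) = hahn_add (hahn_map phibar phi2 f) (hahn_map phibar phi2 g)"
  using additive.add[OF assms] by (simp add: hahn_map_def hahn_add_def)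

lemma hahn_map_mul:
  assumes "bij phi2" and "additive phi2"
    and "inj phibar" and "additive phibar" and "\<And>a b. phibar (a * b) = phibar a * phibar b"
    and "\<And>h h'. phibar (sigma (- beta h h')) = sigma (- beta (phi2 h) (phi2 h'))"
  shows "hahn_map phibar phi2 (hahn_mul sigma beta f g)
       = hahn_mul sigma beta (hahn_map phibar phi2 f) (hahn_map phibar phi2 g)"
proof
  fix k
  define l where "l = inv phi2 k"
  have k: "k = phi2 l" using assms(1) by (simp add: l_def bij_is_surj surj_f_inv_f)
  have inv2: "inv phi2 (phi2 h) = h" "phi2 (inv phi2 j) = j" for h j
    using assms(1) by (simp_all add: bij_is_inj bij_is_surj surj_f_inv_f)
  have inv_add: "inv phi2 (a + b) = inv phi2 a + inv phi2 b" for a b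
    using inv2 additive.add[OF assms(2), of "inv phi2 a" "inv phi2 b"] by metis
  have zero: "phibar a = 0 \<longleftrightarrow> a = 0" for a
    using assms(3) additive.zero[OF assms(4)] by (metis injD)
  have sum: "phibar (sum u S) = (\<Sum>x\<in>S. phibar (u x))" for u and S :: "('h \<times> 'h) set"
    by (rule additive.sum[OF assms(4)])
  have "hahn_map phibar phi2 (hahn_mul sigma beta f g) k
      = (\<Sum>p\<in>{(h, h'). h + h' = l \<and> f h \<noteq> 0 \<and> g h' \<noteq> 0}.
           phibar (f (fst p) * g (snd p) * sigma (- beta (fst p) (snd p))))"
    by (simp add: hahn_map_def hahn_mul_def l_def sum)
  also have "\<dots> = hahn_mul sigma beta (hahn_map phibar phi2 f) (hahn_map phibar phi2 g) k"
    unfolding hahn_mul_def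
  proof (rule sum.reindex_bij_witness[where j = "map_prod phi2 phi2" and i = "map_prod (inv phi2) (inv phi2)"])
  qed (auto simp: inv2 k hahn_map_def zero assms(5,6) additive.add[OF assms(2)] inv_add[symmetric])
  finally show "hahn_map phibar phi2 (hahn_mul sigma beta f g) k
      = hahn_mul sigma beta (hahn_map phibar phi2 f) (hahn_map phibar phi2 g) k" .
qed

lemma well_ordered_hsupp_Least:
  assumes "well_ordered_set (hsupp f)" and "f \<noteq> (\<lambda>_. 0)"
  shows "f (LEAST h. f h \<noteq> 0) \<noteq> 0" and "f h \<noteq> 0 \<Longrightarrow> (LEAST h. f h \<noteq> 0) \<le> h"
proof -
  have "hsupp f \<noteq> {}" using assms(2) by (auto simp: hsupp_def)
  then obtain m where "m \<in> hsupp f" "\<forall>h\<in>hsupp f. m \<le> h"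
    using assms(1) unfolding well_ordered_set_def by blast
  then have m: "f m \<noteq> 0" "\<And>h. f h \<noteq> 0 \<Longrightarrow> m \<le> h" by (auto simp: hsupp_def)
  then have "(LEAST h. f h \<noteq> 0) = m" by (blast intro: Least_equality)
  then show "f (LEAST h. f h \<noteq> 0) \<noteq> 0" and "f h \<noteq> 0 \<Longrightarrow> (LEAST h. f h \<noteq> 0) \<le> h"
    using m by auto
qed

lemma Least_hahn_map:
  assumes "strict_mono phi2" and "surj phi2" and "\<And>a. phibar a = 0 \<longleftrightarrow> a = 0"
    and "well_ordered_set (hsupp f)" and "f \<noteq> (\<lambda>_. 0)"
  shows "(LEAST k. hahn_map phibar phi2 f k \<noteq> 0) = phi2 (LEAST h. f h \<noteq> 0)"
proof (rule Least_equality)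
  have inv2: "inv phi2 (phi2 h) = h" "phi2 (inv phi2 k) = k" for h k
    using assms(1,2) by (simp_all add: strict_mono_imp_inj_on surj_f_inv_f)
  show "hahn_map phibar phi2 f (phi2 (LEAST h. f h \<noteq> 0)) \<noteq> 0"
    using well_ordered_hsupp_Least(1)[OF assms(4,5)] by (simp add: hahn_map_def inv2 assms(3))
  fix k assume "hahn_map phibar phi2 f k \<noteq> 0"
  then have "(LEAST h. f h \<noteq> 0) \<le> inv phi2 k"
    using well_ordered_hsupp_Least(2)[OF assms(4,5)] by (simp add: hahn_map_def assms(3))
  then show "phi2 (LEAST h. f h \<noteq> 0) \<le> k"
    using strict_mono_less_eq[OF assms(1)] inv2 by metis
qed

lemma hahn_val_nonneg_hahn_map:
  assumes "strict_mono phi2" and "surj phi2" and "phi2 0 = 0" and "\<And>a. phibar a = 0 \<longleftrightarrow> a = 0"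
    and "\<And>a. a \<noteq> 0 \<Longrightarrow> 0 \<le> v a \<longleftrightarrow> 0 \<le> v (phibar a)"
    and "well_ordered_set (hsupp f)"
  shows "hahn_val_nonneg v f \<longleftrightarrow> hahn_val_nonneg v (hahn_map phibar phi2 f)"
proof (cases "f = (\<lambda>_. 0)")
  case True
  moreover have "phibar 0 = 0" using assms(4) by blast
  ultimately show ?thesis by (simp add: hahn_val_nonneg_def hahn_map_def)
next
  case False
  define m where "m = (LEAST h. f h \<noteq> 0)"
  have inv2: "inv phi2 (phi2 h) = h" for h
    using assms(1) by (simp add: strict_mono_imp_inj_on)
  have fm: "f m \<noteq> 0" using well_ordered_hsupp_Least(1)[OF assms(6) False] by (simp add: m_def)
  then have "hahn_map phibar phi2 f (phi2 m) \<noteq> 0" by (simp add: hahn_map_def inv2 assms(4))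
  then have "hahn_map phibar phi2 f \<noteq> (\<lambda>_. 0)" by auto
  moreover have "hahn_val v (hahn_map phibar phi2 f) = (v (phibar (f m)), phi2 m)"
    using Least_hahn_map[OF assms(1,2,4,6) False] by (simp add: hahn_val_def hahn_map_def inv2 m_def)
  moreover have "hahn_val v f = (v (f m), m)" by (simp add: hahn_val_def m_def)
  moreover have "0 < phi2 m \<longleftrightarrow> 0 < m" and "phi2 m = 0 \<longleftrightarrow> m = 0"
    using strict_mono_less[OF assms(1), of 0 m] strict_mono_eq[OF assms(1), of m 0] assms(3) by auto
  ultimately show ?thesis
    using False assms(5)[OF fm] by (simp add: hahn_val_nonneg_def gbeta_le_def)
qed

lemma hahn_valued_aut_hahn_map:
  assumes "strict_mono phi2" and "surj phi2" and "additive phi2"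
    and "valued_field_aut v phibar"
    and "\<And>h h'. phibar (sigma (- beta h h')) = sigma (- beta (phi2 h) (phi2 h'))"
  shows "hahn_valued_aut sigma beta v D (hahn_map phibar phi2)"
proof -
  have "bij phi2" using assms(1,2) by (simp add: bij_def strict_mono_imp_inj_on)
  have bij: "bij phibar" and add: "additive phibar"
    and mul: "\<And>a b. phibar (a * b) = phibar a * phibar b"
    and val: "\<And>a. a \<noteq> 0 \<Longrightarrow> 0 \<le> v a \<longleftrightarrow> 0 \<le> v (phibar a)"
    using assms(4) unfolding valued_field_aut_def additive_def by blast+
  have zero: "phibar a = 0 \<longleftrightarrow> a = 0" for a
    using bij additive.zero[OF add] by (metis bij_is_inj injD)
  show ?thesis
    unfolding hahn_valued_aut_def
  proof (intro conjI ballI)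
    show "bij_betw (hahn_map phibar phi2) (hahn_carrier D) (hahn_carrier D)"
      by (rule bij_betw_hahn_map[OF assms(1,2) bij additive.zero[OF add]])
    show "hahn_map phibar phi2 (hahn_add x y) = hahn_add (hahn_map phibar phi2 x) (hahn_map phibar phi2 y)"
      for x y
      by (rule hahn_map_add[OF add])
    show "hahn_map phibar phi2 (hahn_mul sigma beta x y)
        = hahn_mul sigma beta (hahn_map phibar phi2 x) (hahn_map phibar phi2 y)" for x y
      by (rule hahn_map_mul[OF \<open>bij phi2\<close> assms(3) bij_is_inj[OF bij] add mul]) (rule assms(5))
    show "hahn_val_nonneg v x \<longleftrightarrow> hahn_val_nonneg v (hahn_map phibar phi2 x)"
      if "x \<in> hahn_carrier D" for x
    proof (rule hahn_val_nonneg_hahn_map[OF assms(1,2) additive.zero[OF assms(3)]])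
      show "phibar a = 0 \<longleftrightarrow> a = 0" for a by (rule zero)
      show "0 \<le> v a \<longleftrightarrow> 0 \<le> v (phibar a)" if "a \<noteq> 0" for a using that by (rule val)
      show "well_ordered_set (hsupp x)" using that by (simp add: hahn_carrier_def)
    qed
  qed
qed

theorem lemma5p2:
  fixes A :: "'g::linordered_ab_group_add set"
    and rho :: "'g \<Rightarrow> 'h::linordered_ab_group_add"
    and alpha :: "'h \<Rightarrow> 'g"
    and v :: "'l::field_char_0 \<Rightarrow> 'g"
    and p :: nat
    and sigma :: "'g \<Rightarrow> 'l"
    and D :: "'d set"
    and phibar :: "'l \<Rightarrow> 'l"
    and phi1 :: "'g \<Rightarrow> 'g"
    and phi2 :: "'h \<Rightarrow> 'h"
  assumes "smallest_nonzero_convex_subgroup A"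
    and "quotient_projection A rho"
    and "transversal rho alpha"
    and "valued_field v A"
    and "residue_char v p"
    and "cross_section v A sigma"
    and "infinite D"
    and "valued_field_aut v phibar"
    and "\<forall>z\<in>A. phi1 z \<in> A"
    and "gbeta_aut A (cocycle alpha) (\<lambda>(z, h). (phi1 z, phi2 h))"
    and "\<forall>z\<in>A. phibar (sigma z) = sigma (phi1 z)"
  shows "hahn_valued_aut sigma (cocycle alpha) v D (hahn_map phibar phi2)"
proof -
  have A0: "0 \<in> A"
    using uminus_cocycle_mem[OF assms(2,3), of 0 0] cocycle_zero_zero[OF assms(3)] by simp
  have phi2_add: "additive phi2"
    and phi1_cocycle: "phi1 (- cocycle alpha h h') = - cocycle alpha (phi2 h) (phi2 h')" for h h'
    by (rule gbeta_aut_prod_hom[OF assms(10) A0 cocycle_zero_zero[OF assms(3)]])+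
  have sigma_cocycle: "phibar (sigma (- cocycle alpha h h')) = sigma (- cocycle alpha (phi2 h) (phi2 h'))"
    for h h'
    using assms(11) uminus_cocycle_mem[OF assms(2,3), of h h'] by (simp add: phi1_cocycle)
  show ?thesis
    using gbeta_aut_prod_strict_mono[OF assms(10) A0] gbeta_aut_prod_surj[OF assms(10) A0]
      phi2_add assms(8) sigma_cocycle
    by (rule hahn_valued_aut_hahn_map)
qed

end
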